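(* Let $m$ and $n$ be relatively prime positive integers such that every solvable group of order $mn$ has a normal subgroup of order $m$. Then every left brace of size $mn$ is (isomorphic to) a semidirect product $B_1\rtimes_{\tau} B_2$ of a left brace $B_1$ of size $m$ and a left brace $B_2$ of size $n$, for some group morphism $\tau:(B_2,\cdot)\to\operatorname{Aut}(B_1,+,\cdot)$.
   Context: A (left) brace is a triple $(B,+,\cdot)$ where $(B,+)$ is an abelian group, $(B,\cdot)$ is a group, and $a\cdot(b+c)+a=a\cdot b+a\cdot c$ for all $a,b,c\in B$. Its size is $|B|$. A brace morphism is a map preserving both operations; an isomorphism is a bijective brace morphism. $\operatorname{Aut}(B_1,+,\cdot)$ denotes the group of brace automorphisms of $B_1$. Given braces $B_1,B_2$ and a group morphism $\tau:(B_2,\cdot)\to\operatorname{Aut}(B_1,+,\cdot)$, the semidirect product $B_1\rtimes_\tau B_2$ is the set $B_1\times B_2$ with $(a,b)+(a',b')=(a+a',b+b')$ and $(a,b)\cdot(a',b')=(a\cdot\tau(b)(a'),\,b\cdot b')$; it is a brace. When $\tau$ is trivial it is called the direct product. *)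

theory Defs
  imports "HOL-Algebra.Algebra"
begin

definition is_brace :: "'a monoid \<Rightarrow> 'a monoid \<Rightarrow> bool" where
  "is_brace A M \<longleftrightarrow> comm_group A \<and> group M \<and> carrier M = carrier A \<and>
     (\<forall>a\<in>carrier A. \<forall>b\<in>carrier A. \<forall>c\<in>carrier A.
        (a \<otimes>\<^bsub>M\<^esub> (b \<otimes>\<^bsub>A\<^esub> c)) \<otimes>\<^bsub>A\<^esub> a
          = (a \<otimes>\<^bsub>M\<^esub> b) \<otimes>\<^bsub>A\<^esub> (a \<otimes>\<^bsub>M\<^esub> c))"

definition brace_iso :: "'a monoid \<Rightarrow> 'a monoid \<Rightarrow> 'b monoid \<Rightarrow> 'b monoid \<Rightarrow> ('a \<Rightarrow> 'b) \<Rightarrow> bool" where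
  "brace_iso A M A' M' f \<longleftrightarrow> bij_betw f (carrier A) (carrier A') \<and>
     (\<forall>x\<in>carrier A. \<forall>y\<in>carrier A.
        f (x \<otimes>\<^bsub>A\<^esub> y) = f x \<otimes>\<^bsub>A'\<^esub> f y \<and> f (x \<otimes>\<^bsub>M\<^esub> y) = f x \<otimes>\<^bsub>M'\<^esub> f y)"

text \<open>Brace automorphisms (as maps on the carrier; values outside the carrier are irrelevant).\<close>

definition brace_aut :: "'a monoid \<Rightarrow> 'a monoid \<Rightarrow> ('a \<Rightarrow> 'a) set" where
  "brace_aut A M = {f. brace_iso A M A M f}"

definition brace_action :: "'a monoid \<Rightarrow> 'a monoid \<Rightarrow> 'b monoid \<Rightarrow> ('b \<Rightarrow> 'a \<Rightarrow> 'a) \<Rightarrow> bool" where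
  "brace_action A1 M1 M2 \<tau> \<longleftrightarrow>
     (\<forall>b\<in>carrier M2. \<tau> b \<in> brace_aut A1 M1) \<and>
     (\<forall>b\<in>carrier M2. \<forall>b'\<in>carrier M2. \<forall>x\<in>carrier A1.
        \<tau> (b \<otimes>\<^bsub>M2\<^esub> b') x = \<tau> b (\<tau> b' x))"

definition sdp_add :: "'a monoid \<Rightarrow> 'b monoid \<Rightarrow> ('a \<times> 'b) monoid" where
  "sdp_add A1 A2 = \<lparr> carrier = carrier A1 \<times> carrier A2,
     monoid.mult = (\<lambda>(a, b) (a', b'). (a \<otimes>\<^bsub>A1\<^esub> a', b \<otimes>\<^bsub>A2\<^esub> b')),
     one = (\<one>\<^bsub>A1\<^esub>, \<one>\<^bsub>A2\<^esub>) \<rparr>"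

definition sdp_mul :: "'a monoid \<Rightarrow> 'b monoid \<Rightarrow> ('b \<Rightarrow> 'a \<Rightarrow> 'a) \<Rightarrow> ('a \<times> 'b) monoid" where
  "sdp_mul M1 M2 \<tau> = \<lparr> carrier = carrier M1 \<times> carrier M2,
     monoid.mult = (\<lambda>(a, b) (a', b'). (a \<otimes>\<^bsub>M1\<^esub> \<tau> b a', b \<otimes>\<^bsub>M2\<^esub> b')),
     one = (\<one>\<^bsub>M1\<^esub>, \<one>\<^bsub>M2\<^esub>) \<rparr>"

end

theory Submission
  imports Defs
begin

text \<open>
  Write \<open>B\<^sub>k\<close> for the \<open>k\<close>-torsion of \<open>(B,+)\<close>. Since \<open>m\<close> and \<open>n\<close> are coprime,
  \<open>(B,+) = B\<^sub>m \<oplus> B\<^sub>n\<close> with \<open>|B\<^sub>m| = m\<close> and \<open>|B\<^sub>n| = n\<close>. The maps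
  \<open>\<lambda>\<^sub>a(x) = -a + a x\<close> are additive automorphisms with \<open>\<lambda>\<^sub>a\<^sub>b = \<lambda>\<^sub>a \<lambda>\<^sub>b\<close>, so both torsion
  subgroups are left ideals and hence sub-braces.

  The crux is that \<open>\<lambda>\<^sub>a\<close> fixes \<open>B\<^sub>n\<close> pointwise for \<open>a \<in> B\<^sub>m\<close>. Since \<open>a\<^sup>m = 1\<close> in \<open>(B\<^sub>m,\<cdot>)\<close>,
  \<open>\<lambda>\<^sub>a\<close> restricts to an automorphism of \<open>B\<^sub>n\<close> of order dividing \<open>m\<close>, and the semidirect
  product of \<open>B\<^sub>n\<close> by the cyclic group \<open>C\<^sub>m\<close>, the generator acting by \<open>\<lambda>\<^sub>a\<close>, is a
  solvable group of order \<open>mn\<close>.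
  A normal subgroup \<open>N\<close> of order \<open>m\<close> meets the normal subgroup \<open>B\<^sub>n\<close> trivially, so it commutes
  with \<open>B\<^sub>n\<close> and maps onto \<open>C\<^sub>m\<close>; an element of \<open>N\<close> over the generator then forces
  \<open>\<lambda>\<^sub>a = id\<close> on \<open>B\<^sub>n\<close>.

  Consequently \<open>a b = a + b\<close> and \<open>b a = \<lambda>\<^sub>b(a) b\<close> for \<open>a \<in> B\<^sub>m\<close>, \<open>b \<in> B\<^sub>n\<close>, whence
  \<open>(a + b)(a' + b') = a \<lambda>\<^sub>b(a') + b b'\<close>: the map \<open>(a, b) \<mapsto> a + b\<close> is an isomorphism
  onto \<open>B\<close> from the semidirect product of \<open>B\<^sub>m\<close> and \<open>B\<^sub>n\<close> with action \<open>b \<mapsto> \<lambda>\<^sub>b\<close>.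
\<close>

section \<open>Finite groups\<close>

lemma comm_group_imp_solvable:
  assumes "comm_group G"
  shows "solvable G"
proof -
  interpret comm_group G by fact
  have "(derived G ^^ 1) (carrier G) = {\<one>\<^bsub>G\<^esub>}"
    using derived_eq_singleton by simp
  then show ?thesis
    unfolding solvable_def using trivial_derived_seq_imp_solvable[OF subgroup_self] by blast
qed

lemma finite_group_iso_nat_group:
  assumes "group G" and "finite (carrier G)"
  obtains H :: "nat monoid" and h where "group H" and "h \<in> iso G H"
proof -
  interpret group G by fact
  obtain h :: "_ \<Rightarrow> nat" where h: "inj_on h (carrier G)"
    using finite_imp_inj_to_nat_seg[OF assms(2)] by blast
  define H where "H = \<lparr>carrier = h ` carrier G,
    monoid.mult = \<lambda>x y. h (inv_into (carrier G) h x \<otimes>\<^bsub>G\<^esub> inv_into (carrier G) h y),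
    one = h \<one>\<^bsub>G\<^esub>\<rparr>"
  have iso: "h \<in> iso G H"
    using h unfolding iso_def hom_def H_def by (auto simp: bij_betw_def)
  have "group (H\<lparr>one := h \<one>\<^bsub>G\<^esub>\<rparr>)"
    by (rule iso_imp_img_group[OF iso])
  then have "group H"
    by (simp add: H_def)
  with iso show thesis
    using that by blast
qed

lemma solvable_group_has_normal_subgroup:
  fixes G :: "('c, 'd) monoid_scheme"
  assumes hyp: "\<forall>G :: nat monoid. group G \<and> finite (carrier G) \<and> card (carrier G) = m * n
                 \<and> solvable G \<longrightarrow> (\<exists>N. N \<lhd> G \<and> card N = m)"
    and "group G" and "finite (carrier G)" and "card (carrier G) = m * n" and "solvable G"
  obtains N where "N \<lhd> G" and "card N = m"
proof -
  obtain H :: "nat monoid" and h where H: "group H" and h: "h \<in> iso G H"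
    using finite_group_iso_nat_group assms(2,3) by blast
  interpret h: group_hom G H h
    using H h assms(2) by (simp add: group_hom_def group_hom_axioms_def iso_def)
  have "solvable H"
    using h.surj_hom_imp_solvable h \<open>solvable G\<close> by (simp add: iso_def bij_betw_def)
  have hbij: "bij_betw h (carrier G) (carrier H)"
    using h by (simp add: iso_def)
  have "finite (carrier H)"
    using bij_betw_finite[OF hbij] assms(3) by simp
  moreover have "card (carrier H) = m * n"
    using bij_betw_same_card[OF hbij] assms(4) by simp
  ultimately obtain N where N: "N \<lhd> H" "card N = m"
    using hyp H \<open>solvable H\<close> by blast
  have h': "inv_into (carrier G) h \<in> iso H G"
    using h by (rule h.G.iso_set_sym)
  have "inv_into (carrier G) h ` N \<lhd> G"
    using iso_normal_subgroup[OF h' H assms(2) N(1)] .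
  moreover have "inj_on (inv_into (carrier G) h) N"
    using normal_imp_subgroup[OF N(1)] subgroup.subset hbij
    by (metis bij_betw_imp_surj_on inj_on_inv_into)
  ultimately show thesis
    using that N(2) by (simp add: card_image)
qed

lemma (in monoid) pow_mod_eq:
  fixes a k :: nat
  assumes "x \<in> carrier G" and "x [^] k = \<one>"
  shows "x [^] (a mod k) = x [^] a"
proof -
  have "x [^] a = x [^] (a mod k + k * (a div k))"
    by simp
  also have "\<dots> = x [^] (a mod k) \<otimes> (x [^] k) [^] (a div k)"
    using assms(1) by (simp only: nat_pow_mult nat_pow_pow)
  finally show ?thesis
    using assms by simp
qed

lemma (in group) pow_coprime_eq_one:
  fixes a b :: nat
  assumes "x \<in> carrier G" and "x [^] a = \<one>" and "x [^] b = \<one>" and "coprime a b"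
  shows "x = \<one>"
proof -
  have "ord x dvd a" and "ord x dvd b"
    using assms pow_eq_id by auto
  then have "ord x = 1"
    using \<open>coprime a b\<close> coprime_common_divisor_nat by blast
  then show ?thesis
    using ord_eq_1 assms(1) by simp
qed

lemma (in group) pow_card_subgroup_eq_one:
  assumes "subgroup H G" and "finite H" and "x \<in> H"
  shows "x [^] card H = \<one>"
proof -
  interpret H: group "G\<lparr>carrier := H\<rparr>"
    using subgroup_imp_group[OF assms(1)] .
  have "x [^]\<^bsub>G\<lparr>carrier := H\<rparr>\<^esub> order (G\<lparr>carrier := H\<rparr>) = \<one>"
    using H.pow_order_eq_1 assms(3) by simp
  then show ?thesis
    using nat_pow_consistent assms by (simp add: order_def)
qed

lemma (in group) subgroups_coprime_card_inter:
  assumes "subgroup H G" and "subgroup K G" and "finite H" and "finite K"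
    and "coprime (card H) (card K)"
  shows "H \<inter> K = {\<one>}"
proof -
  have "x = \<one>" if "x \<in> H" and "x \<in> K" for x
    using pow_coprime_eq_one[OF subgroup.mem_carrier[OF assms(1) \<open>x \<in> H\<close>]
        pow_card_subgroup_eq_one[OF assms(1,3) \<open>x \<in> H\<close>]
        pow_card_subgroup_eq_one[OF assms(2,4) \<open>x \<in> K\<close>] assms(5)] .
  then show ?thesis
    using assms(1,2) subgroup.one_closed by blast
qed

lemma (in group) normal_subgroups_trivial_inter_commute:
  assumes "N \<lhd> G" and "K \<lhd> G" and "N \<inter> K = {\<one>}" and "a \<in> N" and "b \<in> K"
  shows "a \<otimes> b = b \<otimes> a"
proof -
  interpret N: normal N G by fact
  interpret K: normal K G by fact
  have a: "a \<in> carrier G" and b: "b \<in> carrier G"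
    using assms(4,5) N.subset K.subset by auto
  have "a \<otimes> (b \<otimes> inv a \<otimes> inv b) \<in> N"
    using assms(4) N.inv_op_closed2[OF b N.m_inv_closed[OF assms(4)]] by simp
  moreover have "a \<otimes> b \<otimes> inv a \<otimes> inv b \<in> K"
    using assms(5) K.inv_op_closed2[OF a assms(5)] by simp
  ultimately have "(a \<otimes> b) \<otimes> inv (b \<otimes> a) = \<one>"
    using assms(3) a b by (auto simp: m_assoc inv_mult_group)
  then show ?thesis
    using a b inv_equality[of "a \<otimes> b" "inv (b \<otimes> a)"] by simp
qed

lemma (in group) coprime_order_if_pow_eq_one:
  fixes k l :: nat
  assumes "finite (carrier G)" and "\<forall>x \<in> carrier G. x [^] k = \<one>" and "coprime k l"
  shows "coprime (order G) l"
proof (rule ccontr)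
  assume "\<not> coprime (order G) l"
  then obtain p where p: "Factorial_Ring.prime p" "p dvd gcd (order G) l"
    using prime_factor_nat[of "gcd (order G) l"] by (auto simp: coprime_iff_gcd_eq_1)
  then have "p dvd order G" "p dvd l"
    by simp_all
  then obtain H where H: "subgroup H G" "card H = p" \<comment> \<open>Cauchy, as the case \<open>p\<^sup>1\<close> of Sylow\<close>
    using sylow_thm[OF p(1) is_group, of 1 "order G div p"] assms(1) \<open>p dvd order G\<close> by auto
  then have "finite H" "H \<noteq> {\<one>}"
    using p(1) prime_gt_1_nat finite_subset[OF subgroup.subset assms(1)] by fastforce+
  then obtain x where x: "x \<in> H" "x \<noteq> \<one>"
    using subgroup.one_closed[OF H(1)] by blast
  have "coprime k p"
    using assms(3) \<open>p dvd l\<close> coprime_mult_right_iff dvd_def by metis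
  then have "x = \<one>"
    using pow_coprime_eq_one pow_card_subgroup_eq_one[OF H(1) \<open>finite H\<close> x(1)] H(2) assms(2)
      subgroup.mem_carrier[OF H(1) x(1)] by blast
  with x(2) show False ..
qed

lemma (in group_hom) image_subgroup_eq_if_trivial_kernel_inter:
  assumes "subgroup N G" and "N \<inter> kernel G H h = {\<one>\<^bsub>G\<^esub>}"
    and "finite (carrier H)" and "card N = card (carrier H)"
  shows "h ` N = carrier H"
proof -
  have "kernel (G\<lparr>carrier := N\<rparr>) H h = N \<inter> kernel G H h"
    using subgroup.subset[OF assms(1)] by (auto simp: kernel_def)
  then have "inj_on h N"
    using inj_on_subgroup_iff_trivial_ker[OF assms(1)] assms(2) by simp
  moreover have "h ` N \<subseteq> carrier H"
    using subgroup.subset[OF assms(1)] by auto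
  ultimately show ?thesis
    using assms(3,4) by (simp add: card_image card_subset_eq)
qed

section \<open>Torsion decomposition of finite abelian groups\<close>

definition (in group) torsion :: "nat \<Rightarrow> 'a set" where
  "torsion k = {x \<in> carrier G. x [^] k = \<one>}"

lemma (in group) torsion_carrier: "x \<in> torsion k \<Longrightarrow> x \<in> carrier G"
  by (simp add: torsion_def)

lemma coprime_idempotent_exponent:
  fixes m n :: nat
  assumes "coprime m n"
  obtains e where "e mod m = 1 mod m" and "n dvd e"
proof (cases "n = 0")
  case True
  with assms have "m = 1"
    by simp
  with that[of 0] show thesis
    by simp
next
  case False
  then obtain x y where "n * x = 1 + m * y"
    using bezout_nat[of n m] assms by (auto simp: coprime_iff_gcd_eq_1 gcd.commute)
  then have "(n * x) mod m = 1 mod m"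
    by (simp only: mod_mult_self2)
  with that show thesis
    by (meson dvd_triv_left)
qed

lemma (in comm_group) subgroup_torsion: "subgroup (torsion k) G"
proof (rule subgroupI)
  show "torsion k \<subseteq> carrier G"
    using torsion_carrier by blast
  show "torsion k \<noteq> {}"
    by (auto simp: torsion_def)
next
  show "inv x \<in> torsion k" if "x \<in> torsion k" for x
    using that by (simp add: torsion_def nat_pow_inv)
next
  show "x \<otimes> y \<in> torsion k" if "x \<in> torsion k" and "y \<in> torsion k" for x y
    using that by (simp add: torsion_def nat_pow_distrib)
qed

lemma (in comm_group) coprime_card_torsion:
  fixes k l :: nat
  assumes "finite (carrier G)" and "coprime k l"
  shows "coprime (card (torsion k)) l"
proof -
  interpret T: group "G\<lparr>carrier := torsion k\<rparr>"
    using subgroup_imp_group[OF subgroup_torsion] .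
  have "\<forall>x \<in> torsion k. x [^]\<^bsub>G\<lparr>carrier := torsion k\<rparr>\<^esub> k = \<one>"
    using nat_pow_consistent subgroup_torsion by (simp add: torsion_def)
  then show ?thesis
    using T.coprime_order_if_pow_eq_one[of k l] assms finite_subset[of "torsion k"]
    by (auto simp: order_def torsion_def)
qed

text \<open>Raising to an idempotent exponent \<open>e\<close> of \<open>\<int>/mn\<close> projects onto the \<open>m\<close>-torsion
  along the \<open>n\<close>-torsion.\<close>

lemma (in comm_group) torsion_components:
  fixes m n e :: nat
  assumes exp: "\<forall>x \<in> carrier G. x [^] (m * n) = \<one>"
    and e: "e mod m = 1 mod m" "n dvd e"
  shows "x \<in> carrier G \<Longrightarrow> x [^] e \<in> torsion m"
    and "x \<in> carrier G \<Longrightarrow> x \<otimes> inv (x [^] e) \<in> torsion n"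
    and "\<lbrakk>a \<in> torsion m; b \<in> torsion n\<rbrakk> \<Longrightarrow> (a \<otimes> b) [^] e = a"
proof -
  assume x: "x \<in> carrier G"
  have "(e * m) mod (m * n) = 0"
    using e(2) by (auto simp: mult.commute)
  then have "x [^] (e * m) = \<one>"
    by (metis pow_mod_eq[OF x exp[rule_format, OF x]] nat_pow_0)
  then show "x [^] e \<in> torsion m"
    using x by (simp add: torsion_def nat_pow_pow)
  have "(e * n) mod (m * n) = n mod (m * n)"
    using e(1) by (metis mod_mult_mult2 mult_1)
  then have "x [^] (e * n) = x [^] n"
    by (metis pow_mod_eq[OF x exp[rule_format, OF x]])
  then show "x \<otimes> inv (x [^] e) \<in> torsion n"
    using x by (simp add: torsion_def nat_pow_distrib nat_pow_inv nat_pow_pow flip: nat_pow_pow)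
next
  assume a: "a \<in> torsion m" and b: "b \<in> torsion n"
  then have "a \<in> carrier G" "a [^] m = \<one>" "b \<in> carrier G" "b [^] n = \<one>"
    by (simp_all add: torsion_def)
  moreover have "a [^] e = a"
    using pow_mod_eq e(1) calculation by (metis nat_pow_eone)
  moreover have "b [^] e = \<one>"
    using e(2) calculation by (auto simp: nat_pow_pow[symmetric])
  ultimately show "(a \<otimes> b) [^] e = a"
    by (simp add: nat_pow_distrib)
qed

lemma (in comm_group) bij_betw_torsion_product:
  fixes m n :: nat
  assumes "finite (carrier G)" and "order G = m * n" and "coprime m n"
  shows "bij_betw (\<lambda>(a, b). a \<otimes> b) (torsion m \<times> torsion n) (carrier G)"
proof -
  obtain e where e: "e mod m = 1 mod m" "n dvd e"
    using coprime_idempotent_exponent[OF assms(3)] .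
  have "\<forall>x \<in> carrier G. x [^] (m * n) = \<one>"
    using pow_order_eq_1 assms(2) by simp
  note components = torsion_components[OF this e]
  have cancel: "a \<otimes> b \<otimes> inv a = b" if "a \<in> carrier G" and "b \<in> carrier G" for a b
    using that by (simp add: m_comm[of a b] m_assoc)
  show ?thesis
  proof (rule bij_betw_byWitness[where f' = "\<lambda>x. (x [^] e, x \<otimes> inv (x [^] e))"])
    show "\<forall>x \<in> carrier G. (\<lambda>(a, b). a \<otimes> b) (x [^] e, x \<otimes> inv (x [^] e)) = x"
      by (simp add: m_lcomm)
    show "\<forall>p \<in> torsion m \<times> torsion n.
        (\<lambda>x. (x [^] e, x \<otimes> inv (x [^] e))) ((\<lambda>(a, b). a \<otimes> b) p) = p"
    proof
      fix p assume "p \<in> torsion m \<times> torsion n"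
      then obtain a b where p: "p = (a, b)" "a \<in> torsion m" "b \<in> torsion n"
        by blast
      then show "(\<lambda>x. (x [^] e, x \<otimes> inv (x [^] e))) ((\<lambda>(a, b). a \<otimes> b) p) = p"
        using components(3)[OF p(2,3)] cancel[OF torsion_carrier[OF p(2)] torsion_carrier[OF p(3)]]
        by simp
    qed
    show "(\<lambda>(a, b). a \<otimes> b) ` (torsion m \<times> torsion n) \<subseteq> carrier G"
      using torsion_carrier by auto
    show "(\<lambda>x. (x [^] e, x \<otimes> inv (x [^] e))) ` carrier G \<subseteq> torsion m \<times> torsion n"
      using components(1,2) by auto
  qed
qed

lemma dvd_factors_mult_eq_imp_eq:
  fixes a b m n :: nat
  assumes "a dvd m" and "b dvd n" and "a * b = m * n" and "m * n \<noteq> 0"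
  shows "a = m"
proof -
  obtain c d where "m = a * c" and "n = b * d"
    using assms(1,2) unfolding dvd_def by blast
  with assms(3,4) have "c * d = 1"
    by simp
  with \<open>m = a * c\<close> show ?thesis
    by simp
qed

lemma (in comm_group) card_torsion:
  fixes m n :: nat
  assumes "finite (carrier G)" and "order G = m * n" and "coprime m n"
  shows "card (torsion m) = m"
proof -
  have prod: "card (torsion m) * card (torsion n) = m * n"
    using bij_betw_same_card[OF bij_betw_torsion_product[OF assms]] assms(2)
    by (simp add: card_cartesian_product order_def)
  have "card (torsion m) dvd m * n" and "card (torsion n) dvd n * m"
    using prod by (metis dvd_triv_left, metis dvd_triv_right mult.commute)
  moreover have "coprime (card (torsion m)) n" and "coprime (card (torsion n)) m"
    using coprime_card_torsion[OF assms(1)] assms(3) by (simp_all add: coprime_commute)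
  ultimately have "card (torsion m) dvd m" and "card (torsion n) dvd n"
    by (simp_all add: coprime_dvd_mult_left_iff)
  moreover have "m * n \<noteq> 0"
    using assms(1,2) order_gt_0_iff_finite by fastforce
  ultimately show ?thesis
    using dvd_factors_mult_eq_imp_eq prod by blast
qed

section \<open>Cyclic extensions by a periodic endomorphism\<close>

definition cyclic_semidirect :: "('a, 'b) monoid_scheme \<Rightarrow> ('a \<Rightarrow> 'a) \<Rightarrow> nat \<Rightarrow> ('a \<times> nat) monoid"
  where "cyclic_semidirect G \<phi> m = \<lparr>carrier = carrier G \<times> {..<m},
     monoid.mult = (\<lambda>(x, i) (y, j). (x \<otimes>\<^bsub>G\<^esub> (\<phi> ^^ i) y, (i + j) mod m)),
     one = (\<one>\<^bsub>G\<^esub>, 0)\<rparr>"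

locale periodic_endomorphism = group G for G (structure) +
  fixes \<phi> :: "'a \<Rightarrow> 'a" and m :: nat
  assumes endo: "\<phi> \<in> hom G G"
    and period: "x \<in> carrier G \<Longrightarrow> (\<phi> ^^ m) x = x"
    and period_pos: "0 < m"
begin

abbreviation S where "S \<equiv> cyclic_semidirect G \<phi> m"

lemma carrier_S: "carrier S = carrier G \<times> {..<m}"
  and mult_S: "(x, i) \<otimes>\<^bsub>S\<^esub> (y, j) = (x \<otimes> (\<phi> ^^ i) y, (i + j) mod m)"
  and one_S: "\<one>\<^bsub>S\<^esub> = (\<one>, 0)"
  by (simp_all add: cyclic_semidirect_def)

lemma funpow_hom: "\<phi> ^^ k \<in> hom G G"
proof (induction k)
  case 0
  then show ?case
    by (simp add: hom_def)
next
  case (Suc k)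
  then show ?case
    using endo by (simp add: hom_def Pi_def)
qed

lemma funpow_mod_period: "x \<in> carrier G \<Longrightarrow> (\<phi> ^^ (k mod m)) x = (\<phi> ^^ k) x"
  using funpow_mod_eq period by metis

lemma group_S: "group S"
proof -
  interpret \<Phi>: group_hom G G "\<phi> ^^ k" for k
    using funpow_hom by (simp add: group_hom_def group_hom_axioms_def)
  show ?thesis
  proof (rule groupI)
    show "\<one>\<^bsub>S\<^esub> \<in> carrier S"
      using period_pos by (simp add: carrier_S one_S)
  next
    show "a \<otimes>\<^bsub>S\<^esub> b \<in> carrier S" if "a \<in> carrier S" and "b \<in> carrier S" for a b
      using that period_pos by (auto simp: carrier_S mult_S)
  next
    fix a b c assume "a \<in> carrier S" "b \<in> carrier S" "c \<in> carrier S"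
    then obtain x i y j z k where abc: "a = (x, i)" "b = (y, j)" "c = (z, k)"
      and xyz: "x \<in> carrier G" "y \<in> carrier G" "z \<in> carrier G"
      by (auto simp: carrier_S)
    have "(\<phi> ^^ ((i + j) mod m)) z = (\<phi> ^^ i) ((\<phi> ^^ j) z)"
      using funpow_mod_period xyz by (simp add: funpow_add)
    then show "a \<otimes>\<^bsub>S\<^esub> b \<otimes>\<^bsub>S\<^esub> c = a \<otimes>\<^bsub>S\<^esub> (b \<otimes>\<^bsub>S\<^esub> c)"
      using abc xyz by (simp add: mult_S m_assoc mod_add_left_eq mod_add_right_eq add.assoc)
  next
    show "\<one>\<^bsub>S\<^esub> \<otimes>\<^bsub>S\<^esub> a = a" if "a \<in> carrier S" for a
      using that by (auto simp: carrier_S mult_S one_S)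
  next
    fix a assume "a \<in> carrier S"
    then obtain x i where a: "a = (x, i)" "x \<in> carrier G" "i < m"
      by (auto simp: carrier_S)
    define j where "j = (m - i) mod m"
    have "(j + i) mod m = 0"
      using a(3) by (simp add: j_def mod_add_left_eq)
    then have "((\<phi> ^^ j) (inv x), j) \<otimes>\<^bsub>S\<^esub> a = \<one>\<^bsub>S\<^esub>"
      using a by (simp add: mult_S one_S flip: \<Phi>.hom_mult)
    moreover have "((\<phi> ^^ j) (inv x), j) \<in> carrier S"
      using a period_pos by (simp add: carrier_S j_def)
    ultimately show "\<exists>b \<in> carrier S. b \<otimes>\<^bsub>S\<^esub> a = \<one>\<^bsub>S\<^esub>"
      by blast
  qed
qed

lemma group_hom_index: "group_hom S (integer_mod_group m) (\<lambda>(x, i). int i)"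
  using group_S period_pos
  by (auto simp: group_hom_def group_hom_axioms_def hom_def carrier_S mult_S
      carrier_integer_mod_group zmod_int)

lemma kernel_index: "kernel S (integer_mod_group m) (\<lambda>(x, i). int i) = carrier G \<times> {0}"
  using period_pos by (auto simp: kernel_def carrier_S)

lemma index_surj: "(\<lambda>(x, i). int i) ` carrier S = carrier (integer_mod_group m)"
proof
  show "(\<lambda>(x, i). int i) ` carrier S \<subseteq> carrier (integer_mod_group m)"
    by (auto simp: carrier_S carrier_integer_mod_group)
next
  show "carrier (integer_mod_group m) \<subseteq> (\<lambda>(x, i). int i) ` carrier S"
  proof
    fix k assume "k \<in> carrier (integer_mod_group m)"
    then have "(\<one>, nat k) \<in> carrier S" and "k = (\<lambda>(x, i). int i) (\<one>, nat k)"
      using period_pos by (auto simp: carrier_S carrier_integer_mod_group)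
    then show "k \<in> (\<lambda>(x, i). int i) ` carrier S"
      by (rule rev_image_eqI)
  qed
qed

lemma solvable_S:
  assumes "comm_group G"
  shows "solvable S"
proof (rule solvable_condition[OF _ group_hom_index index_surj])
  show "group_hom G S (\<lambda>x. (x, 0))"
    using group_S is_group period_pos
    by (auto simp: group_hom_def group_hom_axioms_def hom_def carrier_S mult_S)
  show "kernel S (integer_mod_group m) (\<lambda>(x, i). int i) \<subseteq> (\<lambda>x. (x, 0)) ` carrier G"
    by (auto simp: kernel_index)
  show "solvable G"
    using comm_group_imp_solvable[OF assms] .
  show "solvable (integer_mod_group m)"
    using comm_group_imp_solvable[OF abelian_integer_mod_group] .
qed

lemma card_S: "card (carrier S) = m * order G"
  by (simp add: carrier_S card_cartesian_product order_def)

lemma normal_base: "carrier G \<times> {0} \<lhd> S"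
  using group_hom.normal_kernel[OF group_hom_index] by (simp add: kernel_index)

context
  fixes N
  assumes finite: "finite (carrier G)" and coprime: "coprime m (order G)"
    and N: "N \<lhd> S" and card_N: "card N = m"
begin

lemma normal_subgroup_inter_base: "N \<inter> carrier G \<times> {0} = {\<one>\<^bsub>S\<^esub>}"
proof -
  have "finite N"
    using finite finite_subset[OF normal_imp_subgroup[OF N, THEN subgroup.subset]]
    by (simp add: carrier_S)
  moreover have "finite (carrier G \<times> {0})" and "coprime (card N) (card (carrier G \<times> {0}))"
    using finite coprime card_N by (simp_all add: card_cartesian_product order_def)
  ultimately show ?thesis
    using group.subgroups_coprime_card_inter[OF group_S normal_imp_subgroup[OF N]
        normal_imp_subgroup[OF normal_base]]
    by blast
qed

lemma normal_subgroup_over_generator: "\<exists>b. (b, 1 mod m) \<in> N"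
proof -
  interpret index: group_hom S "integer_mod_group m" "\<lambda>(x, i). int i"
    using group_hom_index .
  have "int (1 mod m) \<in> carrier (integer_mod_group m)"
    using period_pos by (simp add: carrier_integer_mod_group)
  moreover have "(\<lambda>(x, i). int i) ` N = carrier (integer_mod_group m)"
    using index.image_subgroup_eq_if_trivial_kernel_inter[OF normal_imp_subgroup[OF N]]
      normal_subgroup_inter_base card_N period_pos
    by (simp add: kernel_index carrier_integer_mod_group)
  ultimately obtain p where "p \<in> N" and "(\<lambda>(x, i). int i) p = int (1 mod m)"
    by (metis imageE)
  then show ?thesis
    by (metis case_prod_conv of_nat_eq_iff prod.exhaust)
qed

lemma fixed_if_normal_subgroup:
  assumes "comm_group G" and x: "x \<in> carrier G"
  shows "\<phi> x = x"
proof -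
  obtain b where b1: "(b, 1 mod m) \<in> N"
    using normal_subgroup_over_generator by blast
  have b: "b \<in> carrier G"
    using b1 normal_imp_subgroup[OF N, THEN subgroup.subset] by (auto simp: carrier_S)
  have "(x, 0) \<in> carrier G \<times> {0}"
    using x by simp
  then have "(b, 1 mod m) \<otimes>\<^bsub>S\<^esub> (x, 0) = (x, 0) \<otimes>\<^bsub>S\<^esub> (b, 1 mod m)"
    using group.normal_subgroups_trivial_inter_commute[OF group_S N normal_base
        normal_subgroup_inter_base b1]
    by blast
  then have "b \<otimes> (\<phi> ^^ (1 mod m)) x = x \<otimes> b"
    by (simp add: mult_S)
  also have "\<dots> = b \<otimes> x"
    by (rule comm_groupE(4)[OF assms(1) x b])
  finally have "(\<phi> ^^ (1 mod m)) x = x"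
    using b hom_in_carrier[OF funpow_hom x] x by simp
  then show ?thesis
    using funpow_mod_period[OF x, of 1] by simp
qed

end

lemma fixed_if_normal_subgroups_exist:
  assumes hyp: "\<forall>G :: nat monoid. group G \<and> finite (carrier G) \<and> card (carrier G) = m * n
                 \<and> solvable G \<longrightarrow> (\<exists>N. N \<lhd> G \<and> card N = m)"
    and "comm_group G" and "finite (carrier G)" and "order G = n" and "coprime m n"
    and "x \<in> carrier G"
  shows "\<phi> x = x"
proof -
  have "finite (carrier S)" and "card (carrier S) = m * n"
    using assms(3,4) by (simp_all add: carrier_S card_S order_def)
  then obtain N where "N \<lhd> S" and "card N = m"
    using solvable_group_has_normal_subgroup[OF hyp group_S] solvable_S[OF assms(2)] by blast
  then show ?thesis
    using fixed_if_normal_subgroup assms(2-6) by (simp add: order_def)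
qed

end

section \<open>Braces\<close>

lemma brace_iso_inv_into:
  assumes iso: "brace_iso A M A' M' f"
    and closed: "\<And>x y. \<lbrakk>x \<in> carrier A; y \<in> carrier A\<rbrakk> \<Longrightarrow>
                   x \<otimes>\<^bsub>A\<^esub> y \<in> carrier A \<and> x \<otimes>\<^bsub>M\<^esub> y \<in> carrier A"
  shows "brace_iso A' M' A M (inv_into (carrier A) f)"
proof -
  have bij: "bij_betw f (carrier A) (carrier A')"
    using iso unfolding brace_iso_def by (rule conjunct1)
  let ?g = "inv_into (carrier A) f"
  have "?g (x \<otimes>\<^bsub>A'\<^esub> y) = ?g x \<otimes>\<^bsub>A\<^esub> ?g y \<and> ?g (x \<otimes>\<^bsub>M'\<^esub> y) = ?g x \<otimes>\<^bsub>M\<^esub> ?g y"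
    if "x \<in> carrier A'" and "y \<in> carrier A'" for x y
  proof -
    have img: "carrier A' = f ` carrier A"
      using bij by (simp add: bij_betw_def)
    have "x \<in> f ` carrier A" and "y \<in> f ` carrier A"
      using that unfolding img .
    then obtain u v where u: "u \<in> carrier A" "x = f u" and v: "v \<in> carrier A" "y = f v"
      by blast
    then have "x \<otimes>\<^bsub>A'\<^esub> y = f (u \<otimes>\<^bsub>A\<^esub> v)" and "x \<otimes>\<^bsub>M'\<^esub> y = f (u \<otimes>\<^bsub>M\<^esub> v)"
      using iso unfolding brace_iso_def by simp_all
    then show ?thesis
      using u v closed bij by (simp add: bij_betw_def)
  qed
  then show ?thesis
    using bij_betw_inv_into[OF bij] by (simp add: brace_iso_def)
qed

locale brace =
  fixes A M :: "'a monoid"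
  assumes is_brace: "is_brace A M"
begin

sublocale A: comm_group A
  using is_brace by (simp add: is_brace_def)

sublocale M: group M
  using is_brace by (simp add: is_brace_def)

lemma carrier_M: "carrier M = carrier A"
  using is_brace by (simp add: is_brace_def)

lemma brace_distrib:
  "\<lbrakk>a \<in> carrier A; b \<in> carrier A; c \<in> carrier A\<rbrakk> \<Longrightarrow>
    (a \<otimes>\<^bsub>M\<^esub> (b \<otimes>\<^bsub>A\<^esub> c)) \<otimes>\<^bsub>A\<^esub> a = (a \<otimes>\<^bsub>M\<^esub> b) \<otimes>\<^bsub>A\<^esub> (a \<otimes>\<^bsub>M\<^esub> c)"
  using is_brace by (simp add: is_brace_def)

lemma mult_M_closed [simp]: "\<lbrakk>a \<in> carrier A; b \<in> carrier A\<rbrakk> \<Longrightarrow> a \<otimes>\<^bsub>M\<^esub> b \<in> carrier A"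
  using M.m_closed carrier_M by blast

lemma inv_M_closed [simp]: "a \<in> carrier A \<Longrightarrow> inv\<^bsub>M\<^esub> a \<in> carrier A"
  using M.inv_closed carrier_M by blast

lemma one_M: "\<one>\<^bsub>M\<^esub> = \<one>\<^bsub>A\<^esub>"
proof -
  have one: "\<one>\<^bsub>M\<^esub> \<in> carrier A"
    using carrier_M by blast
  have "(\<one>\<^bsub>M\<^esub> \<otimes>\<^bsub>M\<^esub> \<one>\<^bsub>A\<^esub>) \<otimes>\<^bsub>A\<^esub> \<one>\<^bsub>M\<^esub>
      = (\<one>\<^bsub>M\<^esub> \<otimes>\<^bsub>M\<^esub> \<one>\<^bsub>A\<^esub>) \<otimes>\<^bsub>A\<^esub> (\<one>\<^bsub>M\<^esub> \<otimes>\<^bsub>M\<^esub> \<one>\<^bsub>A\<^esub>)"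
    using brace_distrib[OF one A.one_closed A.one_closed] by simp
  then show ?thesis
    using one carrier_M by simp
qed

definition lambda :: "'a \<Rightarrow> 'a \<Rightarrow> 'a" where
  "lambda a x = inv\<^bsub>A\<^esub> a \<otimes>\<^bsub>A\<^esub> (a \<otimes>\<^bsub>M\<^esub> x)"

lemma lambda_closed [simp]: "\<lbrakk>a \<in> carrier A; x \<in> carrier A\<rbrakk> \<Longrightarrow> lambda a x \<in> carrier A"
  by (simp add: lambda_def)

lemma mult_eq_add_lambda: "\<lbrakk>a \<in> carrier A; x \<in> carrier A\<rbrakk> \<Longrightarrow> a \<otimes>\<^bsub>M\<^esub> x = a \<otimes>\<^bsub>A\<^esub> lambda a x"
  by (simp add: lambda_def flip: A.m_assoc)

lemma lambda_add:
  assumes "a \<in> carrier A" and "x \<in> carrier A" and "y \<in> carrier A"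
  shows "lambda a (x \<otimes>\<^bsub>A\<^esub> y) = lambda a x \<otimes>\<^bsub>A\<^esub> lambda a y"
proof -
  have "a \<otimes>\<^bsub>M\<^esub> (x \<otimes>\<^bsub>A\<^esub> y) = (a \<otimes>\<^bsub>M\<^esub> x) \<otimes>\<^bsub>A\<^esub> (a \<otimes>\<^bsub>M\<^esub> y) \<otimes>\<^bsub>A\<^esub> inv\<^bsub>A\<^esub> a"
    using brace_distrib[OF assms] assms by (simp add: A.inv_solve_right)
  then show ?thesis
    using assms by (simp add: lambda_def A.m_ac)
qed

lemma group_hom_lambda: "a \<in> carrier A \<Longrightarrow> group_hom A A (lambda a)"
  using lambda_add by (simp add: group_hom_def group_hom_axioms_def hom_def)

lemma lambda_one: "x \<in> carrier A \<Longrightarrow> lambda \<one>\<^bsub>A\<^esub> x = x"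
  using M.l_one[of x] carrier_M by (simp add: lambda_def one_M)

lemma lambda_mult:
  assumes a: "a \<in> carrier A" and b: "b \<in> carrier A" and x: "x \<in> carrier A"
  shows "lambda (a \<otimes>\<^bsub>M\<^esub> b) x = lambda a (lambda b x)"
proof -
  interpret L: group_hom A A "lambda a"
    using group_hom_lambda[OF a] .
  have "lambda a (lambda b x) = inv\<^bsub>A\<^esub> (lambda a b) \<otimes>\<^bsub>A\<^esub> lambda a (b \<otimes>\<^bsub>M\<^esub> x)"
    using a b x by (simp add: lambda_def[of b] lambda_add)
  also have "\<dots> = inv\<^bsub>A\<^esub> (inv\<^bsub>A\<^esub> a \<otimes>\<^bsub>A\<^esub> (a \<otimes>\<^bsub>M\<^esub> b))
      \<otimes>\<^bsub>A\<^esub> (inv\<^bsub>A\<^esub> a \<otimes>\<^bsub>A\<^esub> (a \<otimes>\<^bsub>M\<^esub> b \<otimes>\<^bsub>M\<^esub> x))"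
    using a b x carrier_M by (simp add: lambda_def M.m_assoc)
  also have "\<dots> = lambda (a \<otimes>\<^bsub>M\<^esub> b) x"
    using a b x by (simp add: lambda_def A.inv_mult A.m_ac) (simp flip: A.m_assoc)
  finally show ?thesis
    by simp
qed

lemma lambda_pow_M: "\<lbrakk>a \<in> carrier A; x \<in> carrier A\<rbrakk> \<Longrightarrow> (lambda a ^^ k) x = lambda (a [^]\<^bsub>M\<^esub> k) x"
proof (induction k)
  case 0
  then show ?case
    by (simp add: lambda_one one_M)
next
  case (Suc k)
  have ak: "a [^]\<^bsub>M\<^esub> k \<in> carrier A"
    using Suc.prems carrier_M by (metis M.nat_pow_closed)
  have "(lambda a ^^ Suc k) x = lambda a (lambda (a [^]\<^bsub>M\<^esub> k) x)"
    using Suc by simp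
  also have "\<dots> = lambda (a \<otimes>\<^bsub>M\<^esub> a [^]\<^bsub>M\<^esub> k) x"
    using lambda_mult[OF _ ak] Suc.prems by simp
  also have "a \<otimes>\<^bsub>M\<^esub> a [^]\<^bsub>M\<^esub> k = a [^]\<^bsub>M\<^esub> Suc k"
    using M.nat_pow_Suc2 Suc.prems carrier_M by simp
  finally show ?case .
qed

lemma inv_M_eq_lambda:
  assumes "a \<in> carrier A"
  shows "inv\<^bsub>M\<^esub> a = inv\<^bsub>A\<^esub> (lambda (inv\<^bsub>M\<^esub> a) a)"
proof -
  have "inv\<^bsub>M\<^esub> a \<otimes>\<^bsub>M\<^esub> a = \<one>\<^bsub>A\<^esub>"
    using M.l_inv assms carrier_M one_M by simp
  then have "lambda (inv\<^bsub>M\<^esub> a) a = inv\<^bsub>A\<^esub> (inv\<^bsub>M\<^esub> a)"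
    using assms by (simp add: lambda_def)
  then show ?thesis
    using A.inv_inv[OF inv_M_closed[OF assms]] by metis
qed

lemma sub_brace_if_left_ideal:
  assumes I: "subgroup I A" and ideal: "\<And>a x. \<lbrakk>a \<in> carrier A; x \<in> I\<rbrakk> \<Longrightarrow> lambda a x \<in> I"
  shows "subgroup I M" and "is_brace (A\<lparr>carrier := I\<rparr>) (M\<lparr>carrier := I\<rparr>)"
proof -
  interpret I: subgroup I A
    using I .
  show subM: "subgroup I M"
  proof (rule M.subgroupI)
    show "I \<subseteq> carrier M"
      using carrier_M I.subset by simp
    show "I \<noteq> {}"
      using I.one_closed by blast
  next
    fix x assume "x \<in> I"
    then have "inv\<^bsub>A\<^esub> (lambda (inv\<^bsub>M\<^esub> x) x) \<in> I"
      using ideal by simp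
    then show "inv\<^bsub>M\<^esub> x \<in> I"
      using inv_M_eq_lambda I.mem_carrier[OF \<open>x \<in> I\<close>] by simp
  next
    show "x \<otimes>\<^bsub>M\<^esub> y \<in> I" if "x \<in> I" and "y \<in> I" for x y
      using that ideal mult_eq_add_lambda by simp
  qed
  interpret I_A: group "A\<lparr>carrier := I\<rparr>"
    using A.subgroup_imp_group[OF I] .
  have "comm_group (A\<lparr>carrier := I\<rparr>)"
    by (rule I_A.group_comm_groupI) (auto simp: A.m_comm)
  moreover have "group (M\<lparr>carrier := I\<rparr>)"
    using M.subgroup_imp_group[OF subM] .
  ultimately show "is_brace (A\<lparr>carrier := I\<rparr>) (M\<lparr>carrier := I\<rparr>)"
    using brace_distrib by (simp add: is_brace_def)
qed

lemma lambda_torsion: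
  assumes "a \<in> carrier A" and "x \<in> A.torsion k"
  shows "lambda a x \<in> A.torsion k"
proof -
  interpret L: group_hom A A "lambda a"
    using group_hom_lambda[OF assms(1)] .
  show ?thesis
    using assms(2) by (simp add: A.torsion_def flip: L.hom_nat_pow)
qed

lemma subgroup_M_torsion: "subgroup (A.torsion k) M"
  and is_brace_torsion: "is_brace (A\<lparr>carrier := A.torsion k\<rparr>) (M\<lparr>carrier := A.torsion k\<rparr>)"
  using sub_brace_if_left_ideal[OF A.subgroup_torsion lambda_torsion] by blast+

end

locale coprime_brace = brace +
  fixes m n :: nat
  assumes finite_carrier: "finite (carrier A)"
    and card_carrier: "card (carrier A) = m * n"
    and coprime: "coprime m n"
begin

lemma m_pos: "0 < m"
  using card_carrier finite_carrier A.one_closed card_gt_0_iff[of "carrier A"] by auto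

lemma card_torsion_m: "card (A.torsion m) = m"
  and card_torsion_n: "card (A.torsion n) = n"
  using A.card_torsion[OF finite_carrier, of m n] A.card_torsion[OF finite_carrier, of n m]
    card_carrier coprime by (simp_all add: order_def coprime_commute mult.commute)

lemma finite_torsion: "finite (A.torsion k)"
  using finite_carrier by (rule finite_subset[rotated]) (auto simp: A.torsion_def)

lemma periodic_lambda:
  assumes "a \<in> A.torsion m"
  shows "periodic_endomorphism (A\<lparr>carrier := A.torsion n\<rparr>) (lambda a) m"
proof (intro periodic_endomorphism.intro periodic_endomorphism_axioms.intro)
  show "group (A\<lparr>carrier := A.torsion n\<rparr>)"
    by (rule A.subgroup_imp_group[OF A.subgroup_torsion])
  have a: "a \<in> carrier A"
    using assms by (rule A.torsion_carrier)
  show "lambda a \<in> hom (A\<lparr>carrier := A.torsion n\<rparr>) (A\<lparr>carrier := A.torsion n\<rparr>)"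
    using lambda_torsion[OF a] lambda_add[OF a] A.torsion_carrier by (auto simp: hom_def)
  have "a [^]\<^bsub>M\<^esub> m = \<one>\<^bsub>A\<^esub>"
    using M.pow_card_subgroup_eq_one[OF subgroup_M_torsion finite_torsion assms] card_torsion_m one_M
    by simp
  then show "(lambda a ^^ m) x = x" if "x \<in> carrier (A\<lparr>carrier := A.torsion n\<rparr>)" for x
    using that a lambda_pow_M lambda_one A.torsion_carrier by simp
  show "0 < m"
    by (rule m_pos)
qed

context
  assumes hyp: "\<forall>G :: nat monoid. group G \<and> finite (carrier G) \<and> card (carrier G) = m * n
                 \<and> solvable G \<longrightarrow> (\<exists>N. N \<lhd> G \<and> card N = m)"
begin

lemma lambda_torsion_fixed:
  assumes "a \<in> A.torsion m" and "b \<in> A.torsion n"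
  shows "lambda a b = b"
proof -
  interpret periodic_endomorphism "A\<lparr>carrier := A.torsion n\<rparr>" "lambda a" m
    using periodic_lambda[OF assms(1)] .
  show ?thesis
    using fixed_if_normal_subgroups_exist[OF hyp] is_brace_torsion[of n]
      finite_torsion card_torsion_n coprime assms(2)
    by (simp add: is_brace_def order_def)
qed

lemma mult_torsion_eq_add: "\<lbrakk>a \<in> A.torsion m; b \<in> A.torsion n\<rbrakk> \<Longrightarrow> a \<otimes>\<^bsub>M\<^esub> b = a \<otimes>\<^bsub>A\<^esub> b"
  using mult_eq_add_lambda lambda_torsion_fixed A.torsion_carrier by simp

lemma mult_torsion_commute:
  assumes a: "a \<in> A.torsion m" and b: "b \<in> A.torsion n"
  shows "b \<otimes>\<^bsub>M\<^esub> a = lambda b a \<otimes>\<^bsub>M\<^esub> b"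
proof -
  have "lambda b a \<in> A.torsion m"
    using lambda_torsion a b A.torsion_carrier by blast
  then have "lambda b a \<otimes>\<^bsub>M\<^esub> b = lambda b a \<otimes>\<^bsub>A\<^esub> b"
    using mult_torsion_eq_add b by blast
  also have "\<dots> = b \<otimes>\<^bsub>M\<^esub> a"
    using mult_eq_add_lambda a b A.torsion_carrier A.m_comm by simp
  finally show ?thesis
    by simp
qed

lemma lambda_mult_M:
  assumes b: "b \<in> A.torsion n" and x: "x \<in> A.torsion m" and y: "y \<in> A.torsion m"
  shows "lambda b (x \<otimes>\<^bsub>M\<^esub> y) = lambda b x \<otimes>\<^bsub>M\<^esub> lambda b y"
proof -
  have xy: "x \<otimes>\<^bsub>M\<^esub> y \<in> A.torsion m"
    using subgroup.m_closed[OF subgroup_M_torsion x y] .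
  have carr: "b \<in> carrier A" "x \<in> carrier A" "y \<in> carrier A"
    using b x y A.torsion_carrier by auto
  have "lambda b (x \<otimes>\<^bsub>M\<^esub> y) \<otimes>\<^bsub>M\<^esub> b = b \<otimes>\<^bsub>M\<^esub> x \<otimes>\<^bsub>M\<^esub> y"
    using mult_torsion_commute[OF xy b] carr carrier_M by (simp add: M.m_assoc)
  also have "\<dots> = lambda b x \<otimes>\<^bsub>M\<^esub> (b \<otimes>\<^bsub>M\<^esub> y)"
    using mult_torsion_commute[OF x b] carr carrier_M by (simp add: M.m_assoc)
  also have "\<dots> = (lambda b x \<otimes>\<^bsub>M\<^esub> lambda b y) \<otimes>\<^bsub>M\<^esub> b"
    using mult_torsion_commute[OF y b] carr carrier_M by (simp add: M.m_assoc)
  finally show ?thesis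
    using carr carrier_M by (simp add: M.r_cancel)
qed

lemma brace_action_lambda:
  "brace_action (A\<lparr>carrier := A.torsion m\<rparr>) (M\<lparr>carrier := A.torsion m\<rparr>)
     (M\<lparr>carrier := A.torsion n\<rparr>) lambda"
proof -
  have "bij_betw (lambda b) (A.torsion m) (A.torsion m)" if b: "b \<in> A.torsion n" for b
  proof (rule bij_betw_byWitness[where f' = "lambda (inv\<^bsub>M\<^esub> b)"])
    have "b \<in> carrier A"
      using b A.torsion_carrier by blast
    then show "\<forall>x \<in> A.torsion m. lambda (inv\<^bsub>M\<^esub> b) (lambda b x) = x"
      and "\<forall>x \<in> A.torsion m. lambda b (lambda (inv\<^bsub>M\<^esub> b) x) = x"
      and "lambda b ` A.torsion m \<subseteq> A.torsion m"
      and "lambda (inv\<^bsub>M\<^esub> b) ` A.torsion m \<subseteq> A.torsion m"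
      using lambda_mult lambda_one lambda_torsion A.torsion_carrier carrier_M one_M
      by (auto simp flip: lambda_mult)
  qed
  then show ?thesis
    using lambda_add lambda_mult_M lambda_mult A.torsion_carrier
    by (simp add: brace_action_def brace_aut_def brace_iso_def)
qed

lemma brace_iso_semidirect_sum:
  "brace_iso (sdp_add (A\<lparr>carrier := A.torsion m\<rparr>) (A\<lparr>carrier := A.torsion n\<rparr>))
     (sdp_mul (M\<lparr>carrier := A.torsion m\<rparr>) (M\<lparr>carrier := A.torsion n\<rparr>) lambda)
     A M (\<lambda>(a, b). a \<otimes>\<^bsub>A\<^esub> b)"
proof -
  have bij: "bij_betw (\<lambda>(a, b). a \<otimes>\<^bsub>A\<^esub> b) (A.torsion m \<times> A.torsion n) (carrier A)"
    using A.bij_betw_torsion_product finite_carrier card_carrier coprime by (simp add: order_def)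
  have add: "(a \<otimes>\<^bsub>A\<^esub> a') \<otimes>\<^bsub>A\<^esub> (b \<otimes>\<^bsub>A\<^esub> b') = (a \<otimes>\<^bsub>A\<^esub> b) \<otimes>\<^bsub>A\<^esub> (a' \<otimes>\<^bsub>A\<^esub> b')"
    if "a \<in> carrier A" "a' \<in> carrier A" "b \<in> carrier A" "b' \<in> carrier A" for a a' b b'
    using that by (simp add: A.m_ac)
  have mult: "(a \<otimes>\<^bsub>M\<^esub> lambda b a') \<otimes>\<^bsub>A\<^esub> (b \<otimes>\<^bsub>M\<^esub> b')
      = (a \<otimes>\<^bsub>A\<^esub> b) \<otimes>\<^bsub>M\<^esub> (a' \<otimes>\<^bsub>A\<^esub> b')"
    if a: "a \<in> A.torsion m" "a' \<in> A.torsion m" and b: "b \<in> A.torsion n" "b' \<in> A.torsion n"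
    for a a' b b'
  proof -
    have carr: "a \<in> carrier A" "a' \<in> carrier A" "b \<in> carrier A" "b' \<in> carrier A"
      using a b A.torsion_carrier by auto
    have "a \<otimes>\<^bsub>M\<^esub> lambda b a' \<in> A.torsion m" and "b \<otimes>\<^bsub>M\<^esub> b' \<in> A.torsion n"
      using subgroup_M_torsion lambda_torsion a b carr by (simp_all add: subgroup.m_closed)
    then have "(a \<otimes>\<^bsub>M\<^esub> lambda b a') \<otimes>\<^bsub>A\<^esub> (b \<otimes>\<^bsub>M\<^esub> b')
        = (a \<otimes>\<^bsub>M\<^esub> lambda b a') \<otimes>\<^bsub>M\<^esub> (b \<otimes>\<^bsub>M\<^esub> b')"
      by (simp add: mult_torsion_eq_add)
    also have "\<dots> = a \<otimes>\<^bsub>M\<^esub> (lambda b a' \<otimes>\<^bsub>M\<^esub> b) \<otimes>\<^bsub>M\<^esub> b'"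
      using carr carrier_M by (simp add: M.m_assoc)
    also have "\<dots> = (a \<otimes>\<^bsub>M\<^esub> b) \<otimes>\<^bsub>M\<^esub> (a' \<otimes>\<^bsub>M\<^esub> b')"
      using carr carrier_M mult_torsion_commute[OF a(2) b(1), symmetric]
      by (simp add: M.m_assoc[symmetric])
    finally show ?thesis
      using a b by (simp add: mult_torsion_eq_add)
  qed
  show ?thesis
    using bij add mult A.torsion_carrier
    by (auto simp: brace_iso_def sdp_add_def sdp_mul_def)
qed

lemma semidirect_decomposition:
  "\<exists>(A1 :: 'a monoid) M1 (A2 :: 'a monoid) M2 \<tau> f.
     is_brace A1 M1 \<and> finite (carrier A1) \<and> card (carrier A1) = m \<and>
     is_brace A2 M2 \<and> finite (carrier A2) \<and> card (carrier A2) = n \<and>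
     brace_action A1 M1 M2 \<tau> \<and>
     brace_iso A M (sdp_add A1 A2) (sdp_mul M1 M2 \<tau>) f"
proof (intro exI conjI)
  let ?A1 = "A\<lparr>carrier := A.torsion m\<rparr>" and ?M1 = "M\<lparr>carrier := A.torsion m\<rparr>"
    and ?A2 = "A\<lparr>carrier := A.torsion n\<rparr>" and ?M2 = "M\<lparr>carrier := A.torsion n\<rparr>"
  show "is_brace ?A1 ?M1" and "is_brace ?A2 ?M2"
    by (rule is_brace_torsion)+
  show "finite (carrier ?A1)" and "finite (carrier ?A2)"
    using finite_torsion by simp_all
  show "card (carrier ?A1) = m" and "card (carrier ?A2) = n"
    using card_torsion_m card_torsion_n by simp_all
  show "brace_action ?A1 ?M1 ?M2 lambda"
    by (rule brace_action_lambda)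
  have "x \<otimes>\<^bsub>sdp_add ?A1 ?A2\<^esub> y \<in> carrier (sdp_add ?A1 ?A2)
      \<and> x \<otimes>\<^bsub>sdp_mul ?M1 ?M2 lambda\<^esub> y \<in> carrier (sdp_add ?A1 ?A2)"
    if "x \<in> carrier (sdp_add ?A1 ?A2)" and "y \<in> carrier (sdp_add ?A1 ?A2)" for x y
    using that A.subgroup_torsion subgroup_M_torsion lambda_torsion A.torsion_carrier
    by (auto simp: sdp_add_def sdp_mul_def subgroup.m_closed)
  then show "brace_iso A M (sdp_add ?A1 ?A2) (sdp_mul ?M1 ?M2 lambda)
      (inv_into (carrier (sdp_add ?A1 ?A2)) (\<lambda>(a, b). a \<otimes>\<^bsub>A\<^esub> b))"
    using brace_iso_inv_into[OF brace_iso_semidirect_sum] by blast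
qed

end

end

theorem mainTheorem1:
  fixes m n :: nat and A M :: "'a monoid"
  assumes "m > 0" and "n > 0" and "coprime m n"
    and hyp: "\<forall>G :: nat monoid. group G \<and> finite (carrier G) \<and> card (carrier G) = m * n
                 \<and> solvable G \<longrightarrow> (\<exists>N. N \<lhd> G \<and> card N = m)"
    and "is_brace A M" and "finite (carrier A)" and "card (carrier A) = m * n"
  shows "\<exists>(A1 :: 'a monoid) M1 (A2 :: 'a monoid) M2 \<tau> f.
           is_brace A1 M1 \<and> finite (carrier A1) \<and> card (carrier A1) = m \<and>
           is_brace A2 M2 \<and> finite (carrier A2) \<and> card (carrier A2) = n \<and>
           brace_action A1 M1 M2 \<tau> \<and>
           brace_iso A M (sdp_add A1 A2) (sdp_mul M1 M2 \<tau>) f"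
proof -
  interpret coprime_brace A M m n
    using assms by (simp add: coprime_brace_def coprime_brace_axioms_def brace_def)
  show ?thesis
    using semidirect_decomposition[OF hyp] .
qed

end
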